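(* Let $q\ge2$, $m\ge1$, $a$ a nonnegative integer and $R\in[m]$. Then $$\max_{{\boldsymbol y}\in\Sigma_{q,R}^m}\sum_{i=1}^{R}(r_i+a)\log_2(r_i+a)=(m-R+1+a)\log_2(m-R+1+a)+(R-1)(a+1)\log_2(a+1),$$ where $(r_1,\dots,r_R)$ denotes the run length profile of ${\boldsymbol y}$.
   Context: $\Sigma_q=\{0,\dots,q-1\}$. A run is a maximal block of identical consecutive symbols; the run length profile of ${\boldsymbol y}$ is the vector of its run lengths from left to right. $\Sigma_{q,R}^m$ is the set of sequences in $\Sigma_q^m$ with exactly $R$ runs. *)

theory Defs
  imports "HOL-Analysis.Analysis"
begin

fun run_profile :: "'a list \<Rightarrow> nat list" where
  "run_profile [] = []"
| "run_profile (x # xs) =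
     (let k = length (takeWhile (\<lambda>z. z = x) xs)
      in Suc k # run_profile (drop k xs))"

definition seqs_with_runs :: "nat \<Rightarrow> nat \<Rightarrow> nat \<Rightarrow> nat list set" where
  "seqs_with_runs q m R =
     {y. length y = m \<and> set y \<subseteq> {..<q} \<and> length (run_profile y) = R}"

end

theory Submission
  imports Defs
begin

text \<open>The function \<open>t \<mapsto> t log\<^sub>2 t\<close> is convex, and for a convex function \<open>f\<close> pushing
  two arguments \<open>A, B \<ge> c\<close> apart to \<open>A + B - c\<close> and \<open>c\<close> keeps their sum and does not
  decrease \<open>f A + f B\<close>. Iterating this, a sum of \<open>f\<close> over \<open>R\<close> numbers bounded below by \<open>c\<close>
  is at most the value at the extreme point where \<open>R - 1\<close> of them equal \<open>c\<close>. With
  \<open>f t = t log\<^sub>2 t\<close>, \<open>c = a + 1\<close> and the shifted run lengths \<open>r\<^sub>i + a\<close> (which sum to \<open>m + R a\<close>)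
  this is the claimed bound, and it is attained by one run of length \<open>m - R + 1\<close> followed by
  \<open>R - 1\<close> runs of length one, which two symbols suffice to write.\<close>

definition xlog2x :: "real \<Rightarrow> real" where
  "xlog2x t = t * log 2 t"

lemma convex_on_xlog2x: "convex_on {0<..} xlog2x"
  unfolding xlog2x_def
proof (rule f''_ge0_imp_convex[where f' = "\<lambda>x. log 2 x + 1 / ln 2" and f'' = "\<lambda>x. 1 / (x * ln 2)"])
  fix x :: real
  assume x: "x \<in> {0<..}"
  show "((\<lambda>t. t * log 2 t) has_real_derivative log 2 x + 1 / ln 2) (at x)"
    using x by (auto intro!: derivative_eq_intros simp: log_def field_simps)
  show "((\<lambda>x. log 2 x + 1 / ln 2) has_real_derivative 1 / (x * ln 2)) (at x)"
    using x by (auto intro!: derivative_eq_intros simp: log_def field_simps)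
  show "0 \<le> 1 / (x * ln 2)"
    using x by simp
qed auto

lemma convex_on_spread_pair:
  fixes f :: "real \<Rightarrow> real"
  assumes f: "convex_on {c..} f" and "c \<le> A" "c \<le> B"
  shows "f A + f B \<le> f (A + B - c) + f c"
proof (cases "A + B - c = c")
  case True
  then have "A = c" "B = c"
    using assms by linarith+
  then show ?thesis by simp
next
  case False
  define D where "D = A + B - c"
  have "c < D"
    using False assms unfolding D_def by auto
  define t where "t = (A - c) / (D - c)"
  have t: "0 \<le> t" "t \<le> 1"
    using assms \<open>c < D\<close> unfolding t_def D_def by auto
  have "t * (D - c) = A - c"
    using \<open>c < D\<close> unfolding t_def by simp
  then have A: "A = (1 - t) *\<^sub>R c + t *\<^sub>R D" and B: "B = t *\<^sub>R c + (1 - t) *\<^sub>R D"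
    unfolding D_def by (simp_all add: algebra_simps)
  have "f A \<le> (1 - t) * f c + t * f D"
    unfolding A by (rule convex_onD[OF f]) (use t \<open>c < D\<close> in auto)
  moreover have "f B \<le> (1 - (1 - t)) * f c + (1 - t) * f D"
    using convex_onD[OF f, of "1 - t" c D] t \<open>c < D\<close> unfolding B by auto
  ultimately show ?thesis
    unfolding D_def by (simp add: algebra_simps)
qed

lemma convex_on_sum_list_le_extreme:
  fixes f :: "real \<Rightarrow> real"
  assumes f: "convex_on {c..} f" and "xs \<noteq> []" and "\<forall>x\<in>set xs. c \<le> x"
  shows "(\<Sum>x\<leftarrow>xs. f x)
           \<le> f (sum_list xs - (real (length xs) - 1) * c) + (real (length xs) - 1) * f c"
  using assms(2,3)
proof (induction xs)
  case Nil
  then show ?case by simp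
next
  case (Cons x xs)
  show ?case
  proof (cases "xs = []")
    case True
    then show ?thesis by simp
  next
    case False
    define S where "S = sum_list xs - (real (length xs) - 1) * c"
    have "c * real (length xs) \<le> sum_list xs"
      using sum_list_mono[of xs "\<lambda>_. c" id] Cons.prems by (simp add: sum_list_triv mult.commute)
    then have "c \<le> S"
      unfolding S_def by (simp add: algebra_simps)
    have "(\<Sum>x\<leftarrow>x # xs. f x) \<le> f x + f S + (real (length xs) - 1) * f c"
      using Cons False unfolding S_def by auto
    also have "\<dots> \<le> f (x + S - c) + f c + (real (length xs) - 1) * f c"
      using convex_on_spread_pair[OF f, of x S] Cons.prems \<open>c \<le> S\<close> by auto
    finally show ?thesis
      unfolding S_def by (simp add: algebra_simps)
  qed
qed

lemma sum_list_run_profile: "sum_list (run_profile y) = length y"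
proof (induction y rule: run_profile.induct)
  case (2 x xs)
  have "length (takeWhile (\<lambda>z. z = x) xs) \<le> length xs"
    by (rule length_takeWhile_le)
  with 2 show ?case by (simp add: Let_def)
qed simp

lemma run_profile_pos: "r \<in> set (run_profile y) \<Longrightarrow> 0 < r"
  by (induction y rule: run_profile.induct) (auto simp: Let_def)

lemma run_profile_replicate_append:
  assumes "ys = [] \<or> hd ys \<noteq> x"
  shows "run_profile (replicate (Suc k) x @ ys) = Suc k # run_profile ys"
proof -
  have "takeWhile (\<lambda>z. z = x) (replicate k x @ ys) = replicate k x"
    using assms by (cases ys; induction k) auto
  then show ?thesis by (simp add: Let_def)
qed

fun alternating :: "nat \<Rightarrow> 'a \<Rightarrow> 'a \<Rightarrow> 'a list" where
  "alternating 0 x y = []"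
| "alternating (Suc n) x y = x # alternating n y x"

lemma length_alternating [simp]: "length (alternating n x y) = n"
  by (induction n arbitrary: x y) auto

lemma set_alternating: "set (alternating n x y) \<subseteq> {x, y}"
  by (induction n arbitrary: x y) auto

lemma run_profile_alternating:
  assumes "x \<noteq> y"
  shows "run_profile (alternating n x y) = replicate n 1"
  using assms
proof (induction n arbitrary: x y)
  case (Suc n)
  have "alternating n y x = [] \<or> hd (alternating n y x) \<noteq> x"
    using Suc.prems by (cases n) auto
  from run_profile_replicate_append[OF this, of 0] Suc show ?case
    by simp
qed simp

lemma run_profile_replicate_append_alternating:
  assumes "x \<noteq> y"
  shows "run_profile (replicate (Suc k) x @ alternating n y x) = Suc k # replicate n 1"
proof -
  have "alternating n y x = [] \<or> hd (alternating n y x) \<noteq> x"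
    using assms by (cases n) auto
  then show ?thesis
    using run_profile_replicate_append run_profile_alternating assms by metis
qed

lemma finite_seqs_with_runs: "finite (seqs_with_runs q m R)"
proof (rule finite_subset)
  show "seqs_with_runs q m R \<subseteq> {xs. set xs \<subseteq> {..<q} \<and> length xs = m}"
    unfolding seqs_with_runs_def by auto
qed (rule finite_lists_length_eq[OF finite_lessThan])

lemma sum_run_profile_xlog2x_le:
  fixes a :: nat
  assumes "length (run_profile y) = R" and "1 \<le> R"
  shows "(\<Sum>r\<leftarrow>run_profile y. xlog2x (real r + a))
           \<le> xlog2x (real (length y) - real R + 1 + a) + (real R - 1) * xlog2x (a + 1)"
proof -
  let ?xs = "map (\<lambda>r. real r + a) (run_profile y)"
  have "convex_on {real a + 1..} xlog2x"
    by (rule convex_on_subset[OF convex_on_xlog2x]) auto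
  moreover have "?xs \<noteq> []" and "\<forall>x\<in>set ?xs. real a + 1 \<le> x"
    using assms run_profile_pos[of _ y] by (auto simp: Suc_le_eq)
  ultimately have "(\<Sum>x\<leftarrow>?xs. xlog2x x)
      \<le> xlog2x (sum_list ?xs - (real R - 1) * (a + 1)) + (real R - 1) * xlog2x (a + 1)"
    using convex_on_sum_list_le_extreme[of "real a + 1" xlog2x ?xs] assms(1) by (simp add: add.commute)
  moreover have "sum_list ?xs = real (length y) + real R * a"
    using assms(1) sum_list_run_profile[of y] by (simp add: sum_list_addf sum_list_of_nat sum_list_triv)
  ultimately show ?thesis
    by (simp add: comp_def algebra_simps)
qed

theorem lemma6:
  fixes q m a R :: nat
  assumes "q \<ge> 2" and "m \<ge> 1" and "1 \<le> R" and "R \<le> m"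
  shows "Max ((\<lambda>y. \<Sum>i<R. (real (run_profile y ! i) + real a) *
                             log 2 (real (run_profile y ! i) + real a))
              ` seqs_with_runs q m R)
         = (real m - real R + 1 + real a) * log 2 (real m - real R + 1 + real a)
           + (real R - 1) * (real a + 1) * log 2 (real a + 1)"
  (is "Max (?F ` _) = ?V")
proof -
  have F: "?F y = (\<Sum>r\<leftarrow>run_profile y. xlog2x (real r + a))"
    if "length (run_profile y) = R" for y
    using that by (simp add: xlog2x_def sum_list_sum_nth atLeast0LessThan)
  define y\<^sub>0 where "y\<^sub>0 = replicate (Suc (m - R)) (0::nat) @ alternating (R - 1) 1 0"
  have profile: "run_profile y\<^sub>0 = Suc (m - R) # replicate (R - 1) 1"
    unfolding y\<^sub>0_def by (rule run_profile_replicate_append_alternating) simp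
  have "length y\<^sub>0 = m" and "set y\<^sub>0 \<subseteq> {..<q}"
    using set_alternating[of "R - 1" "1::nat" 0] assms by (auto simp: y\<^sub>0_def)
  with profile assms(3) have "y\<^sub>0 \<in> seqs_with_runs q m R"
    unfolding seqs_with_runs_def by simp
  moreover have "?F y\<^sub>0 = ?V"
    using F[of y\<^sub>0] profile assms by (simp add: xlog2x_def sum_list_replicate of_nat_diff algebra_simps)
  moreover have "?F y \<le> ?V" if "y \<in> seqs_with_runs q m R" for y
    using that F sum_run_profile_xlog2x_le[of y R a] assms
    by (auto simp: seqs_with_runs_def xlog2x_def algebra_simps)
  ultimately show ?thesis
    by (intro Max_eqI finite_imageI finite_seqs_with_runs) (auto intro: rev_image_eqI)
qed

end
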